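(* Let $\beta\in(1,3/2]$ and let $S_\beta$, $T_\beta$, $L_\beta$ be as in the context. Let $\mathcal{S}$ be the Borel $\sigma$-algebra on $S_\beta$, let $\mu$ be an arbitrary $T_\beta$-invariant probability measure on $(S_\beta,\mathcal{S})$, and let $\psi:S_\beta\to S_\beta$ be $\psi(x,y)=\bigl(x,\ \tfrac{1}{\beta-1}-x-y\bigr)$. Put $\nu=\mu\circ\psi^{-1}$. Then the dynamical systems $(S_\beta,\mathcal{S},\mu,T_\beta)$ and $(S_\beta,\mathcal{S},\nu,L_\beta)$ are isomorphic (in the usual measure-theoretic sense).
   Context: Let $\vec q_0=(0,0)$, $\vec q_1=(1,0)$, $\vec q_2=(0,1)$ and $f_{\vec q_i}(\vec z)=(\vec z+\vec q_i)/\beta$ for $i=0,1,2$. $S_\beta$ denotes the attractor of this IFS (the unique nonempty compact set with $S_\beta=\bigcup_i f_{\vec q_i}(S_\beta)$); for $1<\beta\le 3/2$ it equals the closed triangle with vertices $(0,0)$, $(\frac{1}{\beta-1},0)$, $(0,\frac{1}{\beta-1})$. Define the following subsets of $S_\beta$: $E_0=[0,\frac1\beta)\times[0,\frac1\beta)$; $E_1=\{(x,y):0\le y<\frac1\beta,\ \frac{1}{\beta(\beta-1)}<x+y\le\frac{1}{\beta-1}\}$; $E_2=\{(x,y):0\le x<\frac1\beta,\ \frac{1}{\beta(\beta-1)}<x+y\le\frac{1}{\beta-1}\}$; $C_{01}=\{(x,y):x\ge\frac1\beta,\ 0\le y<\frac1\beta,\ x+y\le\frac{1}{\beta(\beta-1)}\}$;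 $C_{12}=\{(x,y):x\ge\frac1\beta,\ y\ge\frac1\beta,\ \frac{1}{\beta(\beta-1)}<x+y\le\frac{1}{\beta-1}\}$; $C_{02}=\{(x,y):0\le x<\frac1\beta,\ y\ge\frac1\beta,\ x+y\le\frac{1}{\beta(\beta-1)}\}$; $C_{012}=\{(x,y):x\ge\frac1\beta,\ y\ge\frac1\beta,\ x+y\le\frac{1}{\beta(\beta-1)}\}$. The greedy map $T_\beta:S_\beta\to S_\beta$ is $T_\beta(\vec z)=\beta\vec z$ on $E_0$; $\beta\vec z-\vec q_1$ on $C_{01}\cup E_1$; $\beta\vec z-\vec q_2$ on $C_{012}\cup C_{12}\cup C_{02}\cup E_2$. The lazy map $L_\beta:S_\beta\to S_\beta$ is $L_\beta(\vec z)=\beta\vec z$ on $C_{012}\cup C_{01}\cup C_{02}\cup E_0$; $\beta\vec z-\vec q_1$ on $C_{12}\cup E_1$; $\beta\vec z-\vec q_2$ on $E_2$. *)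

theory Defs
  imports "HOL-Probability.Probability"
begin

type_synonym pt = "real \<times> real"

definition S_beta :: "real \<Rightarrow> pt set" where
  "S_beta \<beta> = {(x,y). 0 \<le> x \<and> 0 \<le> y \<and> x + y \<le> 1/(\<beta>-1)}"

definition E0 :: "real \<Rightarrow> pt set" where
  "E0 \<beta> = {(x,y). 0 \<le> x \<and> x < 1/\<beta> \<and> 0 \<le> y \<and> y < 1/\<beta>}"
definition E1 :: "real \<Rightarrow> pt set" where
  "E1 \<beta> = {(x,y). 0 \<le> y \<and> y < 1/\<beta> \<and> 1/(\<beta>*(\<beta>-1)) < x + y \<and> x + y \<le> 1/(\<beta>-1)}"
definition E2 :: "real \<Rightarrow> pt set" where
  "E2 \<beta> = {(x,y). 0 \<le> x \<and> x < 1/\<beta> \<and> 1/(\<beta>*(\<beta>-1)) < x + y \<and> x + y \<le> 1/(\<beta>-1)}"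
definition C01 :: "real \<Rightarrow> pt set" where
  "C01 \<beta> = {(x,y). x \<ge> 1/\<beta> \<and> 0 \<le> y \<and> y < 1/\<beta> \<and> x + y \<le> 1/(\<beta>*(\<beta>-1))}"
definition C12 :: "real \<Rightarrow> pt set" where
  "C12 \<beta> = {(x,y). x \<ge> 1/\<beta> \<and> y \<ge> 1/\<beta> \<and> 1/(\<beta>*(\<beta>-1)) < x + y \<and> x + y \<le> 1/(\<beta>-1)}"
definition C02 :: "real \<Rightarrow> pt set" where
  "C02 \<beta> = {(x,y). 0 \<le> x \<and> x < 1/\<beta> \<and> y \<ge> 1/\<beta> \<and> x + y \<le> 1/(\<beta>*(\<beta>-1))}"
definition C012 :: "real \<Rightarrow> pt set" where
  "C012 \<beta> = {(x,y). x \<ge> 1/\<beta> \<and> y \<ge> 1/\<beta> \<and> x + y \<le> 1/(\<beta>*(\<beta>-1))}"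

text \<open>Translation vectors q0 = (0,0), q1 = (1,0), q2 = (0,1).\<close>

definition greedy_map :: "real \<Rightarrow> pt \<Rightarrow> pt" where
  "greedy_map \<beta> z = (let (x,y) = z in
     if z \<in> E0 \<beta> then (\<beta>*x, \<beta>*y)
     else if z \<in> C01 \<beta> \<union> E1 \<beta> then (\<beta>*x - 1, \<beta>*y)
     else if z \<in> C012 \<beta> \<union> C12 \<beta> \<union> C02 \<beta> \<union> E2 \<beta> then (\<beta>*x, \<beta>*y - 1)
     else z)"

definition lazy_map :: "real \<Rightarrow> pt \<Rightarrow> pt" where
  "lazy_map \<beta> z = (let (x,y) = z in
     if z \<in> C012 \<beta> \<union> C01 \<beta> \<union> C02 \<beta> \<union> E0 \<beta> then (\<beta>*x, \<beta>*y)
     else if z \<in> C12 \<beta> \<union> E1 \<beta> then (\<beta>*x - 1, \<beta>*y)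
     else if z \<in> E2 \<beta> then (\<beta>*x, \<beta>*y - 1)
     else z)"

definition psi_map :: "real \<Rightarrow> pt \<Rightarrow> pt" where
  "psi_map \<beta> z = (fst z, 1/(\<beta>-1) - fst z - snd z)"

definition S_borel :: "real \<Rightarrow> pt measure" where
  "S_borel \<beta> = restrict_space borel (S_beta \<beta>)"

definition mps_isomorphic :: "'a measure \<Rightarrow> ('a \<Rightarrow> 'a) \<Rightarrow> 'b measure \<Rightarrow> ('b \<Rightarrow> 'b) \<Rightarrow> bool" where
  "mps_isomorphic M T N S \<longleftrightarrow>
    (\<exists>X' Y' \<phi> \<phi>'.
       X' \<in> sets M \<and> Y' \<in> sets N \<and>
       emeasure M (space M - X') = 0 \<and> emeasure N (space N - Y') = 0 \<and>
       T ` X' \<subseteq> X' \<and> S ` Y' \<subseteq> Y' \<and>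
       bij_betw \<phi> X' Y' \<and> (\<forall>x\<in>X'. \<phi>' (\<phi> x) = x) \<and> (\<forall>y\<in>Y'. \<phi> (\<phi>' y) = y) \<and>
       \<phi> \<in> measurable (restrict_space M X') N \<and>
       \<phi>' \<in> measurable (restrict_space N Y') M \<and>
       (\<forall>A\<in>sets N. emeasure M (\<phi> -` A \<inter> X') = emeasure N A) \<and>
       (\<forall>x\<in>X'. \<phi> (T x) = S (\<phi> x)))"

end

theory Submission
  imports Defs
begin

text \<open>The reflection \<open>\<psi>\<close> keeps \<open>x\<close> and replaces \<open>x + y\<close> by \<open>1/(\<beta>-1) - y\<close>. It maps every
  cell of the partition of \<open>S\<^sub>\<beta>\<close> onto a cell, exchanging the regions where the greedy map uses
  the digits \<open>q\<^sub>0, q\<^sub>1, q\<^sub>2\<close> with those where the lazy map uses \<open>q\<^sub>2, q\<^sub>1, q\<^sub>0\<close>. Since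
  \<open>\<beta>/(\<beta>-1) - 1 = 1/(\<beta>-1)\<close>, it also carries \<open>\<beta>z - q\<close> to \<open>\<beta>\<psi>(z) - q'\<close> with \<open>q'\<close> the swapped
  digit, so \<open>\<psi>\<close> conjugates \<open>T\<^sub>\<beta>\<close> to \<open>L\<^sub>\<beta>\<close>. Being a measurable involution of \<open>S\<^sub>\<beta>\<close>, it is then
  an isomorphism onto the image measure.\<close>

lemma mps_isomorphic_distr_conjugate:
  assumes T: "T \<in> space M \<rightarrow> space M"
    and \<phi>: "\<phi> \<in> measurable M N" and \<phi>': "\<phi>' \<in> measurable N M"
    and left_inv: "\<And>x. x \<in> space M \<Longrightarrow> \<phi>' (\<phi> x) = x"
    and right_inv: "\<And>y. y \<in> space N \<Longrightarrow> \<phi> (\<phi>' y) = y"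
    and conj: "\<And>x. x \<in> space M \<Longrightarrow> \<phi> (T x) = S (\<phi> x)"
  shows "mps_isomorphic M T (distr M N \<phi>) S"
  unfolding mps_isomorphic_def
proof (intro exI conjI ballI)
  show "S ` space (distr M N \<phi>) \<subseteq> space (distr M N \<phi>)"
  proof clarsimp
    fix y assume y: "y \<in> space N"
    have "\<phi>' y \<in> space M"
      using \<phi>' y by (rule measurable_space)
    then have "\<phi> (T (\<phi>' y)) \<in> space N"
      using T \<phi> by (auto dest: measurable_space)
    then show "S y \<in> space N"
      using conj[of "\<phi>' y"] right_inv[OF y] \<open>\<phi>' y \<in> space M\<close> by simp
  qed
  show "bij_betw \<phi> (space M) (space (distr M N \<phi>))"
    using \<phi> \<phi>' left_inv right_inv by (intro bij_betw_byWitness[where f'=\<phi>']) (auto dest: measurable_space)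
  show "\<phi> \<in> measurable (restrict_space M (space M)) (distr M N \<phi>)"
    using \<phi> by (intro measurable_restrict_space1) simp
  show "\<phi>' \<in> measurable (restrict_space (distr M N \<phi>) (space (distr M N \<phi>))) M"
    using \<phi>' by (intro measurable_restrict_space1) simp
  show "emeasure M (\<phi> -` A \<inter> space M) = emeasure (distr M N \<phi>) A" if "A \<in> sets (distr M N \<phi>)" for A
    using that \<phi> by (simp add: emeasure_distr)
qed (use T left_inv right_inv conj in auto)

lemma psi_map_psi_map [simp]: "psi_map \<beta> (psi_map \<beta> z) = z"
  by (simp add: psi_map_def)

lemma psi_map_in_S_beta: "z \<in> S_beta \<beta> \<Longrightarrow> psi_map \<beta> z \<in> S_beta \<beta>"
  by (auto simp: S_beta_def psi_map_def)

lemma measurable_psi_map: "psi_map \<beta> \<in> measurable (S_borel \<beta>) (S_borel \<beta>)"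
  unfolding S_borel_def
proof (rule measurable_restrict_space2)
  show "psi_map \<beta> \<in> space (restrict_space borel (S_beta \<beta>)) \<rightarrow> S_beta \<beta>"
    by (auto simp: space_restrict_space psi_map_in_S_beta)
  have "psi_map \<beta> \<in> borel_measurable borel"
    unfolding psi_map_def by (intro borel_measurable_continuous_onI continuous_intros)
  then show "psi_map \<beta> \<in> measurable (restrict_space borel (S_beta \<beta>)) borel"
    by (rule measurable_restrict_space1)
qed

lemma psi_map_affine:
  assumes "\<beta> \<noteq> 1"
  shows "psi_map \<beta> (\<beta>*x - u, \<beta>*y - v) =
    (\<beta> * fst (psi_map \<beta> (x,y)) - u, \<beta> * snd (psi_map \<beta> (x,y)) - (1 - u - v))"
  using assms by (simp add: psi_map_def field_simps)

lemma
  assumes "1 < \<beta>"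
  shows psi_map_in_E0_iff: "psi_map \<beta> z \<in> E0 \<beta> \<longleftrightarrow> z \<in> E2 \<beta>"
    and psi_map_in_E1_iff: "psi_map \<beta> z \<in> E1 \<beta> \<longleftrightarrow> z \<in> E1 \<beta>"
    and psi_map_in_E2_iff: "psi_map \<beta> z \<in> E2 \<beta> \<longleftrightarrow> z \<in> E0 \<beta>"
    and psi_map_in_C01_iff: "psi_map \<beta> z \<in> C01 \<beta> \<longleftrightarrow> z \<in> C12 \<beta>"
    and psi_map_in_C12_iff: "psi_map \<beta> z \<in> C12 \<beta> \<longleftrightarrow> z \<in> C01 \<beta>"
    and psi_map_in_C02_iff: "psi_map \<beta> z \<in> C02 \<beta> \<longleftrightarrow> z \<in> C02 \<beta>"
    and psi_map_in_C012_iff: "psi_map \<beta> z \<in> C012 \<beta> \<longleftrightarrow> z \<in> C012 \<beta>"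
proof -
  obtain x y where z: "z = (x, y)" by fastforce
  have "1/(\<beta>-1) = 1/(\<beta>*(\<beta>-1)) + 1/\<beta>"
    using assms by (simp add: field_simps)
  then show "psi_map \<beta> z \<in> E0 \<beta> \<longleftrightarrow> z \<in> E2 \<beta>" "psi_map \<beta> z \<in> E1 \<beta> \<longleftrightarrow> z \<in> E1 \<beta>"
    "psi_map \<beta> z \<in> E2 \<beta> \<longleftrightarrow> z \<in> E0 \<beta>" "psi_map \<beta> z \<in> C01 \<beta> \<longleftrightarrow> z \<in> C12 \<beta>"
    "psi_map \<beta> z \<in> C12 \<beta> \<longleftrightarrow> z \<in> C01 \<beta>" "psi_map \<beta> z \<in> C02 \<beta> \<longleftrightarrow> z \<in> C02 \<beta>"
    "psi_map \<beta> z \<in> C012 \<beta> \<longleftrightarrow> z \<in> C012 \<beta>"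
    by (auto simp: z psi_map_def E0_def E1_def E2_def C01_def C12_def C02_def C012_def)
qed

lemmas psi_map_in_cell_iff = psi_map_in_E0_iff psi_map_in_E1_iff psi_map_in_E2_iff
  psi_map_in_C01_iff psi_map_in_C12_iff psi_map_in_C02_iff psi_map_in_C012_iff

text \<open>Disjointness of \<open>E\<^sub>0\<close>, \<open>E\<^sub>1\<close> and \<open>E\<^sub>2\<close> is where \<open>\<beta> \<le> 3/2\<close>, i.e. \<open>2/\<beta> \<le> 1/(\<beta>(\<beta>-1))\<close>, enters.\<close>

lemma greedy_cells_disjoint:
  assumes "1 < \<beta>" "\<beta> \<le> 3/2"
  shows "E0 \<beta> \<inter> (C01 \<beta> \<union> E1 \<beta>) = {}"
    and "E0 \<beta> \<inter> (C012 \<beta> \<union> C12 \<beta> \<union> C02 \<beta> \<union> E2 \<beta>) = {}"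
    and "(C01 \<beta> \<union> E1 \<beta>) \<inter> (C012 \<beta> \<union> C12 \<beta> \<union> C02 \<beta> \<union> E2 \<beta>) = {}"
proof -
  have "2/\<beta> \<le> 1/(\<beta>*(\<beta>-1))"
    using assms by (simp add: field_simps)
  then show "E0 \<beta> \<inter> (C01 \<beta> \<union> E1 \<beta>) = {}"
    "E0 \<beta> \<inter> (C012 \<beta> \<union> C12 \<beta> \<union> C02 \<beta> \<union> E2 \<beta>) = {}"
    "(C01 \<beta> \<union> E1 \<beta>) \<inter> (C012 \<beta> \<union> C12 \<beta> \<union> C02 \<beta> \<union> E2 \<beta>) = {}"
    by (auto simp: E0_def E1_def E2_def C01_def C12_def C02_def C012_def)
qed

lemma lazy_map_psi_map:
  assumes "1 < \<beta>"
  shows "lazy_map \<beta> (psi_map \<beta> z) = (let (x,y) = psi_map \<beta> z in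
     if z \<in> C012 \<beta> \<union> C12 \<beta> \<union> C02 \<beta> \<union> E2 \<beta> then (\<beta>*x, \<beta>*y)
     else if z \<in> C01 \<beta> \<union> E1 \<beta> then (\<beta>*x - 1, \<beta>*y)
     else if z \<in> E0 \<beta> then (\<beta>*x, \<beta>*y - 1)
     else psi_map \<beta> z)"
  unfolding lazy_map_def by (simp add: psi_map_in_cell_iff[OF assms] cong: if_cong)

lemma psi_map_greedy_map:
  assumes "1 < \<beta>" "\<beta> \<le> 3/2"
  shows "psi_map \<beta> (greedy_map \<beta> z) = lazy_map \<beta> (psi_map \<beta> z)"
proof -
  obtain x y where z: "z = (x, y)" by fastforce
  have affine: "psi_map \<beta> (\<beta>*x - u, \<beta>*y - v) =
      (\<beta> * fst (psi_map \<beta> z) - u, \<beta> * snd (psi_map \<beta> z) - (1 - u - v))" for u v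
    using assms(1) by (simp add: z psi_map_affine)
  note disjoint = greedy_cells_disjoint[OF assms]
  note unfold = greedy_map_def lazy_map_psi_map[OF assms(1)] z Let_def case_prod_beta
  consider "z \<in> E0 \<beta>" | "z \<in> C01 \<beta> \<union> E1 \<beta>" | "z \<in> C012 \<beta> \<union> C12 \<beta> \<union> C02 \<beta> \<union> E2 \<beta>"
    | "z \<notin> E0 \<beta> \<union> (C01 \<beta> \<union> E1 \<beta>) \<union> (C012 \<beta> \<union> C12 \<beta> \<union> C02 \<beta> \<union> E2 \<beta>)"
    by blast
  then show ?thesis
  proof cases
    case 1
    then have "z \<notin> C01 \<beta> \<union> E1 \<beta>" "z \<notin> C012 \<beta> \<union> C12 \<beta> \<union> C02 \<beta> \<union> E2 \<beta>"
      using disjoint by blast+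
    with 1 show ?thesis
      using affine[of 0 0] by (simp add: unfold)
  next
    case 2
    then have "z \<notin> E0 \<beta>" "z \<notin> C012 \<beta> \<union> C12 \<beta> \<union> C02 \<beta> \<union> E2 \<beta>"
      using disjoint by blast+
    with 2 show ?thesis
      using affine[of 1 0] by (simp add: unfold)
  next
    case 3
    then have "z \<notin> E0 \<beta>" "z \<notin> C01 \<beta> \<union> E1 \<beta>"
      using disjoint by blast+
    with 3 show ?thesis
      using affine[of 0 1] by (simp add: unfold)
  next
    case 4
    then show ?thesis by (simp add: unfold)
  qed
qed

theorem theorem3p2:
  fixes \<beta> :: real and \<mu> :: "pt measure"
  assumes "1 < \<beta>" and "\<beta> \<le> 3/2"
    and "sets \<mu> = sets (S_borel \<beta>)" and "space \<mu> = S_beta \<beta>"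
    and "prob_space \<mu>"
    and "greedy_map \<beta> \<in> measurable \<mu> \<mu>"
    and "distr \<mu> \<mu> (greedy_map \<beta>) = \<mu>"
  shows "mps_isomorphic \<mu> (greedy_map \<beta>)
           (distr \<mu> (S_borel \<beta>) (psi_map \<beta>)) (lazy_map \<beta>)"
proof (rule mps_isomorphic_distr_conjugate)
  show "greedy_map \<beta> \<in> space \<mu> \<rightarrow> space \<mu>"
    using measurable_space[OF assms(6)] by blast
  show "psi_map \<beta> \<in> measurable \<mu> (S_borel \<beta>)" "psi_map \<beta> \<in> measurable (S_borel \<beta>) \<mu>"
    using measurable_psi_map measurable_cong_sets[OF assms(3) refl]
      measurable_cong_sets[OF refl assms(3)] by blast+
  show "psi_map \<beta> (greedy_map \<beta> z) = lazy_map \<beta> (psi_map \<beta> z)" for z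
    using psi_map_greedy_map[OF assms(1,2)] .
qed simp_all

end
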